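(* Let $s_0<s_1<\dots<s_{\ell_x}$ and $t_0<t_1<\dots<t_{\ell_y}$ be real partitions and let $\{C_{ij}\in\mathbb{R}:0\le i\le \ell_x-1,\ 0\le j\le\ell_y-1\}$ be given, with $K:=\max_{i,j}|C_{ij}|>0$ and $\Delta:=\max_{i,j}\{s_{i+1}-s_i,t_{j+1}-t_j\}$. For an integer $\gamma\ge1$ and a pair of real sequences $(p,q)$ set $$\|(p,q)\|_\gamma=\max\Big\{\sup_{n\ge0}\Big|\frac{(n!)^2p_n}{(\gamma K\Delta)^n}\Big|,\ \sup_{n\ge0}\Big|\frac{(n!)^2q_n}{(\gamma K\Delta)^n}\Big|\Big\}.$$ Define sequences $p^{ij},q^{ij}$ by $p^{i0}=q^{0j}=(1,0,0,\dots)$ and recursively $(p^{i,j+1},q^{i+1,j})=\Lambda_{ij}(p^{ij},q^{ij})$, where for $n\ge0$ $$p^{i,j+1}_n=\sum_{k=0}^{n}p^{ij}_k\frac{(C_{ij}(t_{j+1}-t_j))^{n-k}k!}{(n-k)!\,n!}+\sum_{k=1}^{\infty}q^{ij}_k\frac{C_{ij}^n(t_{j+1}-t_j)^{n+k}k!}{(n+k)!\,n!},$$ $$q^{i+1,j}_n=\sum_{k=0}^{n}q^{ij}_k\frac{(C_{ij}(s_{i+1}-s_i))^{n-k}k!}{(n-k)!\,n!}+\sum_{k=1}^{\infty}p^{ij}_k\frac{C_{ij}^n(s_{i+1}-s_i)^{n+k}k!}{(n+k)!\,n!},$$ and write $\Lambda_{ij}:=(p^{i,j+1},q^{i+1,j})$.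 Then for all $0\le i\le\ell_x-1$, $0\le j\le\ell_y-1$, $$\|\Lambda_{ij}\|_{i+j+1}\le f(i+j),\qquad\text{where } f(k):=\prod_{m=0}^{k}I_0(2\sqrt{mK}\,\Delta).$$
   Context: $I_0$ is the zero-order modified Bessel function of the first kind, $I_0(2z)=\sum_{k\ge0}z^{2k}/(k!)^2$. The sequences $p^{ij},q^{ij}$ are the power-series coefficients of the solution $k$ of $\partial^2k/\partial s\partial t=C_{ij}k$ on each cell $[s_i,s_{i+1}]\times[t_j,t_{j+1}]$ with $k(s_0,\cdot)=k(\cdot,t_0)=1$, i.e. $k(s,t_j)=\sum_n p^{ij}_n(s-s_i)^n$ and $k(s_i,t)=\sum_n q^{ij}_n(t-t_j)^n$. *)

theory Defs
  imports "HOL-Analysis.Analysis"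
begin

definition bessel_I0 :: "real \<Rightarrow> real" where
  "bessel_I0 x = (\<Sum>k. (x / 2) ^ (2 * k) / (fact k)\<^sup>2)"

definition e0 :: "nat \<Rightarrow> real" where
  "e0 n = (if n = 0 then 1 else 0)"

definition Lam :: "real \<Rightarrow> real \<Rightarrow> (nat \<Rightarrow> real) \<Rightarrow> (nat \<Rightarrow> real) \<Rightarrow> nat \<Rightarrow> real" where
  "Lam c h a b n =
     (\<Sum>k = 0..n. a k * (c * h) ^ (n - k) * fact k / (fact (n - k) * fact n))
     + (\<Sum>k. b (Suc k) * c ^ n * h ^ (n + Suc k) * fact (Suc k) / (fact (n + Suc k) * fact n))"

function PP :: "(nat \<Rightarrow> real) \<Rightarrow> (nat \<Rightarrow> real) \<Rightarrow> (nat \<Rightarrow> nat \<Rightarrow> real) \<Rightarrow> nat \<Rightarrow> nat \<Rightarrow> nat \<Rightarrow> real"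
  and QQ :: "(nat \<Rightarrow> real) \<Rightarrow> (nat \<Rightarrow> real) \<Rightarrow> (nat \<Rightarrow> nat \<Rightarrow> real) \<Rightarrow> nat \<Rightarrow> nat \<Rightarrow> nat \<Rightarrow> real"
where
  "PP s t C i 0 = e0"
| "PP s t C i (Suc j) = Lam (C i j) (t (Suc j) - t j) (PP s t C i j) (QQ s t C i j)"
| "QQ s t C 0 j = e0"
| "QQ s t C (Suc i) j = Lam (C i j) (s (Suc i) - s i) (QQ s t C i j) (PP s t C i j)"
  by pat_completeness auto
termination
  by (relation "Wellfounded.measure (case_sum (\<lambda>(s,t,C,i,j). i + j) (\<lambda>(s,t,C,i,j). i + j))") auto

definition Kmax :: "nat \<Rightarrow> nat \<Rightarrow> (nat \<Rightarrow> nat \<Rightarrow> real) \<Rightarrow> real" where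
  "Kmax lx ly C = Max {\<bar>C i j\<bar> | i j. i < lx \<and> j < ly}"

definition Delta :: "nat \<Rightarrow> nat \<Rightarrow> (nat \<Rightarrow> real) \<Rightarrow> (nat \<Rightarrow> real) \<Rightarrow> real" where
  "Delta lx ly s t = max (Max {s (Suc i) - s i | i. i < lx}) (Max {t (Suc j) - t j | j. j < ly})"

text \<open>The weighted norm ||(p,q)||_gamma (valued in the extended reals, since the
  suprema may be infinite).\<close>
definition wnorm :: "nat \<Rightarrow> real \<Rightarrow> real \<Rightarrow> (nat \<Rightarrow> real) \<times> (nat \<Rightarrow> real) \<Rightarrow> ereal" where
  "wnorm \<gamma> K \<Delta> pq =
     max (SUP n. ereal \<bar>(fact n)\<^sup>2 * fst pq n / (real \<gamma> * K * \<Delta>) ^ n\<bar>)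
         (SUP n. ereal \<bar>(fact n)\<^sup>2 * snd pq n / (real \<gamma> * K * \<Delta>) ^ n\<bar>)"

definition fbound :: "real \<Rightarrow> real \<Rightarrow> nat \<Rightarrow> real" where
  "fbound K \<Delta> k = (\<Prod>m = 0..k. bessel_I0 (2 * sqrt (real m * K) * \<Delta>))"

end

theory Submission
  imports Defs
begin

text \<open>Call a sequence \<open>a\<close> \<open>(M, r)\<close>-bounded if \<open>\<bar>a n\<bar> \<le> M r^n / (n!)^2\<close> for all \<open>n\<close>;
  the weighted norm of \<open>(p, q)\<close> with parameter \<open>\<gamma>\<close> is at most \<open>M\<close> when both are
  \<open>(M, \<gamma> K \<Delta>)\<close>-bounded. If \<open>a, b\<close> are \<open>(M, g K \<Delta>)\<close>-bounded, \<open>\<bar>c\<bar> \<le> K\<close> and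
  \<open>0 \<le> h \<le> \<Delta>\<close>, then \<open>Lam c h a b\<close> is \<open>(M I0(2 sqrt(g K) \<Delta>), (g + 1) K \<Delta>)\<close>-bounded: the
  finite convolution collapses to the binomial expansion of \<open>(g + 1)^n\<close>, and, since
  \<open>n! k! \<le> (n + k)!\<close>, the series part is dominated by \<open>(K \<Delta>)^n / (n!)^2\<close> times the tail
  \<open>\<Sum>k\<ge>1. (g K \<Delta>^2)^k / (k!)^2 = I0(2 sqrt(g K) \<Delta>) - 1\<close> of the Bessel series.
  Starting from \<open>(1, 0, 0, \<dots>)\<close>, which is \<open>(1, 0)\<close>-bounded, induction along the
  antidiagonals \<open>i + j = m\<close> shows that \<open>p^ij\<close> and \<open>q^ij\<close> are
  \<open>(\<Prod>m'<m. I0(2 sqrt(m' K) \<Delta>), m K \<Delta>)\<close>-bounded.\<close>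

definition fact_sq_bounded :: "real \<Rightarrow> real \<Rightarrow> (nat \<Rightarrow> real) \<Rightarrow> bool" where
  "fact_sq_bounded M r a \<longleftrightarrow> (\<forall>n. \<bar>a n\<bar> \<le> M * r ^ n / (fact n)\<^sup>2)"

lemma fact_sq_bounded_nonneg: "fact_sq_bounded M r a \<Longrightarrow> 0 \<le> M"
  unfolding fact_sq_bounded_def
  by (metis abs_ge_zero order_trans fact_0 power_0 div_by_1 mult_1_right one_power2)

lemma fact_sq_bounded_e0: "1 \<le> M \<Longrightarrow> 0 \<le> r \<Longrightarrow> fact_sq_bounded M r e0"
  unfolding fact_sq_bounded_def e0_def by auto

lemma summable_power_div_fact_sq: "summable (\<lambda>k. y ^ k / (fact k)\<^sup>2 :: real)"
proof (rule summable_comparison_test[OF _ summable_exp[of "\<bar>y\<bar>"]])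
  show "\<exists>N. \<forall>n\<ge>N. norm (y ^ n / (fact n)\<^sup>2) \<le> inverse (fact n) * \<bar>y\<bar> ^ n"
  proof (intro exI allI impI)
    fix n :: nat
    have "\<bar>y\<bar> ^ n / (fact n)\<^sup>2 \<le> \<bar>y\<bar> ^ n / fact n"
      by (intro divide_left_mono) (auto simp: power2_eq_square)
    then show "norm (y ^ n / (fact n)\<^sup>2) \<le> inverse (fact n) * \<bar>y\<bar> ^ n"
      by (simp add: field_simps power_abs)
  qed
qed

lemma bessel_I0_double_minus_1:
  "bessel_I0 (2 * z) - 1 = (\<Sum>k. (z\<^sup>2) ^ Suc k / (fact (Suc k))\<^sup>2)"
  unfolding bessel_I0_def using suminf_split_head[OF summable_power_div_fact_sq[of "z\<^sup>2"]]
  by (simp add: power_mult)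

lemma bessel_I0_ge_1: "1 \<le> bessel_I0 x"
proof -
  have "0 \<le> (\<Sum>k. ((x / 2)\<^sup>2) ^ Suc k / (fact (Suc k))\<^sup>2)"
    by (intro suminf_nonneg summable_Suc_iff[THEN iffD2] summable_power_div_fact_sq) simp
  then show ?thesis
    using bessel_I0_double_minus_1[of "x / 2"] by simp
qed

lemma fact_mult_le_fact_add: "(fact m * fact n :: real) \<le> fact (m + n)"
  by (metis dvd_imp_le fact_fact_dvd_fact fact_gt_zero of_nat_fact of_nat_le_iff of_nat_mult)

lemma Lam_sum_bound:
  assumes a: "fact_sq_bounded M (g * x) a" and g: "0 \<le> g" and ch: "\<bar>ch\<bar> \<le> x"
  shows "\<bar>\<Sum>k = 0..n. a k * ch ^ (n - k) * fact k / (fact (n - k) * fact n)\<bar>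
           \<le> M * ((g + 1) * x) ^ n / (fact n)\<^sup>2"
proof -
  have M: "0 \<le> M" using fact_sq_bounded_nonneg[OF a] .
  have x: "0 \<le> x" using ch by linarith
  have "\<bar>\<Sum>k = 0..n. a k * ch ^ (n - k) * fact k / (fact (n - k) * fact n)\<bar>
      \<le> (\<Sum>k = 0..n. \<bar>a k\<bar> * \<bar>ch\<bar> ^ (n - k) * (fact k / (fact (n - k) * fact n)))"
    by (rule order_trans[OF sum_abs]) (simp add: abs_mult power_abs)
  also have "\<dots> \<le> (\<Sum>k = 0..n. M * (g * x) ^ k / (fact k)\<^sup>2 * x ^ (n - k)
                                * (fact k / (fact (n - k) * fact n)))"
    using a ch x M g unfolding fact_sq_bounded_def
    by (intro sum_mono mult_right_mono mult_mono power_mono) auto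
  \<comment> \<open>the weight \<open>k! / ((n - k)! n! (k!)\<^sup>2)\<close> is \<open>(n choose k) / (n!)\<^sup>2\<close>\<close>
  also have "\<dots> = (\<Sum>k = 0..n. M * x ^ n / (fact n)\<^sup>2 * (of_nat (n choose k) * g ^ k * 1 ^ (n - k)))"
  proof (rule sum.cong[OF refl])
    fix k assume "k \<in> {0..n}"
    then have kn: "k \<le> n" by simp
    have "fact k * fact (n - k) * real (n choose k) = fact n"
      by (metis binomial_fact_lemma[OF kn] of_nat_fact of_nat_mult)
    moreover have "x ^ n = x ^ k * x ^ (n - k)"
      using kn by (simp flip: power_add)
    ultimately show "M * (g * x) ^ k / (fact k)\<^sup>2 * x ^ (n - k) * (fact k / (fact (n - k) * fact n))
        = M * x ^ n / (fact n)\<^sup>2 * (of_nat (n choose k) * g ^ k * 1 ^ (n - k))"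
      by (simp add: field_simps power2_eq_square power_mult_distrib)
  qed
  also have "\<dots> = M * x ^ n / (fact n)\<^sup>2 * (g + 1) ^ n"
    by (simp add: binomial_ring atLeast0AtMost sum_distrib_left[symmetric]
        sum_divide_distrib[symmetric] del: sum_divide_distrib)
  also have "\<dots> = M * ((g + 1) * x) ^ n / (fact n)\<^sup>2"
    by (simp add: power_mult_distrib)
  finally show ?thesis .
qed

lemma Lam_series_term_bound:
  assumes b: "fact_sq_bounded M (g * K * D) b" and g: "0 \<le> g" and c: "\<bar>c\<bar> \<le> K"
    and h: "0 \<le> h" "h \<le> D"
  shows "\<bar>b m * c ^ n * h ^ (n + m) * fact m / (fact (n + m) * fact n)\<bar>
           \<le> M * (K * D) ^ n / (fact n)\<^sup>2 * ((g * K * D\<^sup>2) ^ m / (fact m)\<^sup>2)"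
proof -
  have M: "0 \<le> M" using fact_sq_bounded_nonneg[OF b] .
  have K: "0 \<le> K" using c by linarith
  define P where "P = M * g ^ m * K ^ (n + m) * D ^ (n + 2 * m)"
  have P: "0 \<le> P" unfolding P_def using M g K h by simp
  have "\<bar>b m * c ^ n * h ^ (n + m) * fact m / (fact (n + m) * fact n)\<bar>
      = \<bar>b m\<bar> * \<bar>c\<bar> ^ n * h ^ (n + m) * (fact m / (fact (n + m) * fact n))"
    using h by (simp add: abs_mult power_abs)
  also have "\<dots> \<le> M * (g * K * D) ^ m / (fact m)\<^sup>2 * K ^ n * D ^ (n + m)
                      * (fact m / (fact (n + m) * fact n))"
    using b c h K M g unfolding fact_sq_bounded_def
    by (intro mult_right_mono mult_mono power_mono) auto
  also have "\<dots> = P / (fact m * fact (n + m) * fact n)"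
    unfolding P_def by (simp add: field_simps power2_eq_square power_mult_distrib power_add power_mult)
  also have "\<dots> \<le> P / (fact m * (fact n * fact m) * fact n)"
    using P fact_mult_le_fact_add[of n m] by (intro divide_left_mono mult_mono) auto
  also have "\<dots> = M * (K * D) ^ n / (fact n)\<^sup>2 * ((g * K * D\<^sup>2) ^ m / (fact m)\<^sup>2)"
    unfolding P_def by (simp add: field_simps power2_eq_square power_mult_distrib power_add power_mult)
  finally show ?thesis .
qed

lemma Lam_series_bound:
  assumes b: "fact_sq_bounded M (g * K * D) b" and g: "0 \<le> g" and c: "\<bar>c\<bar> \<le> K"
    and h: "0 \<le> h" "h \<le> D"
  shows "\<bar>\<Sum>k. b (Suc k) * c ^ n * h ^ (n + Suc k) * fact (Suc k) / (fact (n + Suc k) * fact n)\<bar>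
           \<le> M * (K * D) ^ n / (fact n)\<^sup>2 * (bessel_I0 (2 * sqrt (g * K) * D) - 1)"
proof -
  define T where
    "T k = b (Suc k) * c ^ n * h ^ (n + Suc k) * fact (Suc k) / (fact (n + Suc k) * fact n)" for k
  define A where "A = M * (K * D) ^ n / (fact n)\<^sup>2"
  define v where "v k = (g * K * D\<^sup>2) ^ Suc k / (fact (Suc k))\<^sup>2" for k
  have "(sqrt (g * K) * D)\<^sup>2 = g * K * D\<^sup>2"
    using g c by (simp add: power_mult_distrib)
  then have I0: "bessel_I0 (2 * sqrt (g * K) * D) - 1 = suminf v"
    using bessel_I0_double_minus_1[of "sqrt (g * K) * D"] unfolding v_def by (simp only: mult.assoc)
  have v: "summable v"
    unfolding v_def by (intro summable_Suc_iff[THEN iffD2] summable_power_div_fact_sq)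
  have T: "\<bar>T k\<bar> \<le> A * v k" for k
    unfolding T_def A_def v_def by (rule Lam_series_term_bound[OF b g c h])
  have Av: "summable (\<lambda>k. A * v k)" using summable_mult[OF v] .
  have absT: "summable (\<lambda>k. \<bar>T k\<bar>)"
    by (rule summable_rabs_comparison_test[OF _ Av]) (use T in auto)
  have "\<bar>suminf T\<bar> \<le> (\<Sum>k. \<bar>T k\<bar>)" by (rule summable_rabs[OF absT])
  also have "\<dots> \<le> (\<Sum>k. A * v k)" by (rule suminf_le[OF T absT Av])
  also have "\<dots> = A * suminf v" by (rule suminf_mult[OF v])
  finally show ?thesis unfolding T_def A_def I0 .
qed

lemma Lam_fact_sq_bounded:
  assumes a: "fact_sq_bounded M (g * K * D) a" and b: "fact_sq_bounded M (g * K * D) b"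
    and g: "0 \<le> g" and c: "\<bar>c\<bar> \<le> K" and h: "0 \<le> h" "h \<le> D"
  shows "fact_sq_bounded (M * bessel_I0 (2 * sqrt (g * K) * D)) ((g + 1) * K * D) (Lam c h a b)"
  unfolding fact_sq_bounded_def
proof
  fix n
  define A where "A = M * ((g + 1) * K * D) ^ n / (fact n)\<^sup>2"
  have M: "0 \<le> M" using fact_sq_bounded_nonneg[OF a] .
  have K: "0 \<le> K" using c by linarith
  have D: "0 \<le> D" using h by linarith
  have ch: "\<bar>c * h\<bar> \<le> K * D"
    using c h by (simp add: abs_mult mult_mono)
  have sum: "\<bar>\<Sum>k = 0..n. a k * (c * h) ^ (n - k) * fact k / (fact (n - k) * fact n)\<bar> \<le> A"
    using Lam_sum_bound[of M g "K * D" a "c * h" n] a g ch by (simp add: A_def mult.assoc)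
  have "K * D \<le> (g + 1) * K * D"
    using mult_right_mono[of 1 "g + 1" "K * D"] K D g by (simp add: mult.assoc)
  then have "M * (K * D) ^ n / (fact n)\<^sup>2 \<le> A"
    unfolding A_def using M K D by (intro divide_right_mono mult_left_mono power_mono) auto
  then have series:
    "\<bar>\<Sum>k. b (Suc k) * c ^ n * h ^ (n + Suc k) * fact (Suc k) / (fact (n + Suc k) * fact n)\<bar>
       \<le> A * (bessel_I0 (2 * sqrt (g * K) * D) - 1)"
    using Lam_series_bound[OF b g c h, of n] bessel_I0_ge_1
    by (meson diff_ge_0_iff_ge mult_right_mono order_trans)
  have "\<bar>Lam c h a b n\<bar> \<le> A + A * (bessel_I0 (2 * sqrt (g * K) * D) - 1)"
    unfolding Lam_def using abs_triangle_ineq sum series by (rule order_trans[OF _ add_mono])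
  also have "\<dots> = M * bessel_I0 (2 * sqrt (g * K) * D) * ((g + 1) * K * D) ^ n / (fact n)\<^sup>2"
    unfolding A_def by (simp add: field_simps)
  finally show "\<bar>Lam c h a b n\<bar> \<le> \<dots>" .
qed

definition bessel_prod :: "real \<Rightarrow> real \<Rightarrow> nat \<Rightarrow> real" where
  "bessel_prod K D m = (\<Prod>m' < m. bessel_I0 (2 * sqrt (real m' * K) * D))"

lemma fbound_eq_bessel_prod: "fbound K D k = bessel_prod K D (Suc k)"
  unfolding fbound_def bessel_prod_def by (simp add: atLeast0AtMost lessThan_Suc_atMost)

lemma bessel_prod_ge_1: "1 \<le> bessel_prod K D m"
  unfolding bessel_prod_def by (intro prod_ge_1 bessel_I0_ge_1)

lemma Lam_bessel_prod_step:
  assumes "fact_sq_bounded (bessel_prod K D m) (real m * K * D) a"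
    and "fact_sq_bounded (bessel_prod K D m) (real m * K * D) b"
    and "\<bar>c\<bar> \<le> K" and "0 \<le> h" and "h \<le> D"
  shows "fact_sq_bounded (bessel_prod K D (Suc m)) (real (Suc m) * K * D) (Lam c h a b)"
  using Lam_fact_sq_bounded[OF assms(1,2) _ assms(3-5)]
  by (simp add: bessel_prod_def add.commute)

lemma PP_QQ_fact_sq_bounded:
  assumes K: "0 \<le> K" and D: "0 \<le> D"
    and C_bound: "\<And>i j. i < lx \<Longrightarrow> j < ly \<Longrightarrow> \<bar>C i j\<bar> \<le> K"
    and s_steps: "\<And>i. i < lx \<Longrightarrow> s i \<le> s (Suc i) \<and> s (Suc i) - s i \<le> D"
    and t_steps: "\<And>j. j < ly \<Longrightarrow> t j \<le> t (Suc j) \<and> t (Suc j) - t j \<le> D"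
  shows "(i < lx \<longrightarrow> j \<le> ly \<longrightarrow>
           fact_sq_bounded (bessel_prod K D (i + j)) (real (i + j) * K * D) (PP s t C i j))
       \<and> (i \<le> lx \<longrightarrow> j < ly \<longrightarrow>
           fact_sq_bounded (bessel_prod K D (i + j)) (real (i + j) * K * D) (QQ s t C i j))"
proof (induction "i + j" arbitrary: i j)
  case 0
  then show ?case
    using K D by (auto intro: fact_sq_bounded_e0 bessel_prod_ge_1)
next
  case (Suc m)
  have e0: "fact_sq_bounded (bessel_prod K D (i + j)) (real (i + j) * K * D) e0"
    using K D by (auto intro: fact_sq_bounded_e0 bessel_prod_ge_1)
  have PP: "fact_sq_bounded (bessel_prod K D (i + j)) (real (i + j) * K * D) (PP s t C i j)"
    if "i < lx" "j \<le> ly"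
  proof (cases j)
    case 0
    then show ?thesis using e0 by simp
  next
    case (Suc j')
    then have "m = i + j'" using Suc.hyps(2) by simp
    note IH = Suc.hyps(1)[OF this]
    have "fact_sq_bounded (bessel_prod K D (Suc (i + j'))) (real (Suc (i + j')) * K * D)
      (PP s t C i (Suc j'))"
      unfolding PP.simps by (rule Lam_bessel_prod_step) (use IH that Suc C_bound t_steps in auto)
    then show ?thesis using Suc by simp
  qed
  have QQ: "fact_sq_bounded (bessel_prod K D (i + j)) (real (i + j) * K * D) (QQ s t C i j)"
    if "i \<le> lx" "j < ly"
  proof (cases i)
    case 0
    then show ?thesis using e0 by simp
  next
    case (Suc i')
    then have "m = i' + j" using Suc.hyps(2) by simp
    note IH = Suc.hyps(1)[OF this]
    have "fact_sq_bounded (bessel_prod K D (Suc (i' + j))) (real (Suc (i' + j)) * K * D)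
      (QQ s t C (Suc i') j)"
      unfolding QQ.simps by (rule Lam_bessel_prod_step) (use IH that Suc C_bound s_steps in auto)
    then show ?thesis using Suc by simp
  qed
  show ?case using PP QQ by blast
qed

lemma SUP_fact_sq_scaled_le:
  assumes r: "0 < r" and a: "fact_sq_bounded M r a"
  shows "(SUP n. ereal \<bar>(fact n)\<^sup>2 * a n / r ^ n\<bar>) \<le> ereal M"
proof (rule SUP_least)
  fix n
  have "\<bar>(fact n)\<^sup>2 * a n / r ^ n\<bar> = (fact n)\<^sup>2 * \<bar>a n\<bar> / r ^ n"
    using r by (simp add: abs_mult)
  also have "\<dots> \<le> (fact n)\<^sup>2 * (M * r ^ n / (fact n)\<^sup>2) / r ^ n"
    using a r unfolding fact_sq_bounded_def by (intro divide_right_mono mult_left_mono) auto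
  also have "\<dots> = M" using r by simp
  finally show "ereal \<bar>(fact n)\<^sup>2 * a n / r ^ n\<bar> \<le> ereal M" by simp
qed

lemma wnorm_le_if_fact_sq_bounded:
  assumes "0 < real \<gamma> * K * D"
    and "fact_sq_bounded M (real \<gamma> * K * D) p" and "fact_sq_bounded M (real \<gamma> * K * D) q"
  shows "wnorm \<gamma> K D (p, q) \<le> ereal M"
  unfolding wnorm_def using SUP_fact_sq_scaled_le[OF assms(1)] assms(2,3) by simp

lemma abs_le_Kmax: "i < lx \<Longrightarrow> j < ly \<Longrightarrow> \<bar>C i j\<bar> \<le> Kmax lx ly C"
  unfolding Kmax_def by (rule Max_ge) (auto intro: finite_image_set2)

lemma s_step_le_Delta: "i < lx \<Longrightarrow> s (Suc i) - s i \<le> Delta lx ly s t"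
  unfolding Delta_def by (rule max.coboundedI1, rule Max_ge) auto

lemma t_step_le_Delta: "j < ly \<Longrightarrow> t (Suc j) - t j \<le> Delta lx ly s t"
  unfolding Delta_def by (rule max.coboundedI2, rule Max_ge) auto

theorem mainTheorem4:
  fixes lx ly :: nat and s t :: "nat \<Rightarrow> real" and C :: "nat \<Rightarrow> nat \<Rightarrow> real"
  assumes "0 < lx" and "0 < ly"
    and "\<forall>i<lx. s i < s (Suc i)"
    and "\<forall>j<ly. t j < t (Suc j)"
    and "0 < Kmax lx ly C"
  shows "\<forall>i<lx. \<forall>j<ly.
           wnorm (Suc (i + j)) (Kmax lx ly C) (Delta lx ly s t)
                 (PP s t C i (Suc j), QQ s t C (Suc i) j)
           \<le> ereal (fbound (Kmax lx ly C) (Delta lx ly s t) (i + j))"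
proof (intro allI impI)
  fix i j assume i: "i < lx" and j: "j < ly"
  let ?K = "Kmax lx ly C" and ?D = "Delta lx ly s t"
  have s_steps: "s i \<le> s (Suc i) \<and> s (Suc i) - s i \<le> ?D" if "i < lx" for i
    using that assms(3) s_step_le_Delta by fastforce
  have t_steps: "t j \<le> t (Suc j) \<and> t (Suc j) - t j \<le> ?D" if "j < ly" for j
    using that assms(4) t_step_le_Delta by fastforce
  have D: "0 < ?D"
    using s_steps[of 0] assms(1,3) by force
  note bounds = PP_QQ_fact_sq_bounded[of ?K ?D lx ly C s t, OF _ _ abs_le_Kmax s_steps t_steps]
  have "fact_sq_bounded (bessel_prod ?K ?D (Suc (i + j))) (real (Suc (i + j)) * ?K * ?D)
      (PP s t C i (Suc j))"
    using bounds[of i "Suc j"] assms(5) D i j by simp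
  moreover have "fact_sq_bounded (bessel_prod ?K ?D (Suc (i + j))) (real (Suc (i + j)) * ?K * ?D)
      (QQ s t C (Suc i) j)"
    using bounds[of "Suc i" j] assms(5) D i j by simp
  ultimately show "wnorm (Suc (i + j)) ?K ?D (PP s t C i (Suc j), QQ s t C (Suc i) j)
      \<le> ereal (fbound ?K ?D (i + j))"
    unfolding fbound_eq_bessel_prod using assms(5) D by (intro wnorm_le_if_fact_sq_bounded) auto
qed

end
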